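(* A skew lattice $(S,\wedge,\vee)$ is a strong distributive solution of the Yang–Baxter equation if and only if it satisfies the identities \[ x\wedge y\wedge((x\vee y)\wedge z)=x\wedge y\wedge z, \] \[ (x\wedge y)\vee((x\vee y)\wedge z)=(x\vee(y\wedge z))\wedge(y\vee z), \] \[ x\vee y\vee z=x\vee(y\wedge z)\vee y\vee z \] for all $x,y,z\in S$. In particular, the class of skew lattices that are strong distributive solutions is a variety.
   Context: A skew lattice is a set $S$ with two binary operations $\wedge,\vee$, each idempotent and associative, satisfying the absorption laws $x\wedge(x\vee y)=x=x\vee(x\wedge y)$ and $(x\wedge y)\vee y=y=(x\vee y)\wedge y$ for all $x,y\in S$. A map $r:X\times X\to X\times X$ is a set-theoretic solution of the Yang–Baxter equation if $(r\times\mathrm{id})\circ(\mathrm{id}\times r)\circ(r\times\mathrm{id})=(\mathrm{id}\times r)\circ(r\times\mathrm{id})\circ(\mathrm{id}\times r)$. A skew lattice $S$ is a strong distributive solution if the map $r:S\times S\to S\times S$, $r(x,y)=(x\wedge y,x\vee y)$, is a set-theoretic solution of the Yang–Baxter equation. *)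

theory Defs
  imports Main
begin

definition skew_lattice :: "('a \<Rightarrow> 'a \<Rightarrow> 'a) \<Rightarrow> ('a \<Rightarrow> 'a \<Rightarrow> 'a) \<Rightarrow> bool" where
  "skew_lattice meet join \<longleftrightarrow>
     (\<forall>x. meet x x = x) \<and> (\<forall>x. join x x = x) \<and>
     (\<forall>x y z. meet (meet x y) z = meet x (meet y z)) \<and>
     (\<forall>x y z. join (join x y) z = join x (join y z)) \<and>
     (\<forall>x y. meet x (join x y) = x \<and> join x (meet x y) = x) \<and>
     (\<forall>x y. join (meet x y) y = y \<and> meet (join x y) y = y)"

definition r12 :: "('a \<times> 'a \<Rightarrow> 'a \<times> 'a) \<Rightarrow> 'a \<times> 'a \<times> 'a \<Rightarrow> 'a \<times> 'a \<times> 'a" where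
  "r12 r = (\<lambda>(x, y, z). (let (u, v) = r (x, y) in (u, v, z)))"

definition r23 :: "('a \<times> 'a \<Rightarrow> 'a \<times> 'a) \<Rightarrow> 'a \<times> 'a \<times> 'a \<Rightarrow> 'a \<times> 'a \<times> 'a" where
  "r23 r = (\<lambda>(x, y, z). (let (v, w) = r (y, z) in (x, v, w)))"

definition is_YBE_solution :: "('a \<times> 'a \<Rightarrow> 'a \<times> 'a) \<Rightarrow> bool" where
  "is_YBE_solution r \<longleftrightarrow> r12 r \<circ> r23 r \<circ> r12 r = r23 r \<circ> r12 r \<circ> r23 r"

definition strong_distributive_solution :: "('a \<Rightarrow> 'a \<Rightarrow> 'a) \<Rightarrow> ('a \<Rightarrow> 'a \<Rightarrow> 'a) \<Rightarrow> bool" where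
  "strong_distributive_solution meet join \<longleftrightarrow>
     skew_lattice meet join \<and> is_YBE_solution (\<lambda>(x, y). (meet x y, join x y))"

end

theory Submission
  imports Defs
begin

lemma is_YBE_solution_binop_pair_iff:
  fixes f g :: "'a \<Rightarrow> 'a \<Rightarrow> 'a"
  shows "is_YBE_solution (\<lambda>(x, y). (f x y, g x y)) \<longleftrightarrow>
    (\<forall>x y z.
       f (f x y) (f (g x y) z) = f x (f y z) \<and>
       g (f x y) (f (g x y) z) = f (g x (f y z)) (g y z) \<and>
       g (g x y) z = g (g x (f y z)) (g y z))"
  unfolding is_YBE_solution_def r12_def r23_def
  by (auto simp: fun_eq_iff Let_def)

theorem mainTheorem4:
  fixes meet join :: "'a \<Rightarrow> 'a \<Rightarrow> 'a"
  assumes "skew_lattice meet join"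
  shows "strong_distributive_solution meet join \<longleftrightarrow>
    (\<forall>x y z.
       meet (meet x y) (meet (join x y) z) = meet (meet x y) z \<and>
       join (meet x y) (meet (join x y) z) = meet (join x (meet y z)) (join y z) \<and>
       join (join x y) z = join (join (join x (meet y z)) y) z)"
proof -
  have meet_assoc: "\<And>x y z. meet (meet x y) z = meet x (meet y z)"
    and join_assoc: "\<And>x y z. join (join x y) z = join x (join y z)"
    using assms unfolding skew_lattice_def by blast+
  show ?thesis
    using assms
    unfolding strong_distributive_solution_def is_YBE_solution_binop_pair_iff
    by (simp add: meet_assoc join_assoc)
qed

end
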